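(* Let $K$ be a differential field of characteristic $0$ and let $M$ be a differential module over $K$ of dimension $3$ with $\det M=\mathbf{1}$. Suppose that there exists $F\in \mathrm{sym}^2M$ with $\partial F=0$ such that $F$ is non degenerate and has a non trivial isotropic vector. Then there exists a differential module $N$ over $K$ of dimension $2$ with $\det N=\mathbf{1}$ and $\mathrm{sym}^2N\cong M$.
   Context: A differential module over $K$ is a finite-dimensional $K$-vector space with an additive map $\partial$ satisfying $\partial(fm)=f'm+f\partial m$; $\mathrm{sym}^2M$, $\Lambda^kM$ carry the induced derivations, $\det M=\Lambda^{\dim M}M$, and $\mathbf{1}$ is the trivial module $K$ with $\partial=$ the derivation of $K$. An element $F\in\mathrm{sym}^2M$ defines a symmetric bilinear form $(a,b)=F(a\otimes b)$ on the dual $M^*$; $F$ is non degenerate if this form is, and an isotropic vector is a nonzero $a\in M^*$ with $(a,a)=0$. *)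

theory Defs
  imports "HOL-Analysis.Analysis"
begin

definition derivation :: "('k::field \<Rightarrow> 'k) \<Rightarrow> bool" where
  "derivation D \<longleftrightarrow> (\<forall>a b. D (a + b) = D a + D b) \<and> (\<forall>a b. D (a * b) = D a * b + a * D b)"

text \<open>A differential module of dimension n over (K,D), realised on the standard
K-vector space K^n (every n-dimensional K-vector space is isomorphic to it):
an additive map dM satisfying the Leibniz rule.\<close>
definition diff_module :: "('k::field \<Rightarrow> 'k) \<Rightarrow> ('k^'n \<Rightarrow> 'k^'n) \<Rightarrow> bool" where
  "diff_module D dM \<longleftrightarrow>
     (\<forall>x y. dM (x + y) = dM x + dM y) \<and> (\<forall>f x. dM (f *s x) = D f *s x + f *s dM x)"

text \<open>Tensors in M \<otimes> M are represented by their coefficient matrices T, meaning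
the tensor  \<Sum> T_ij e_i \<otimes> e_j.  sym^2 M is the (char 0) subspace of symmetric tensors.\<close>
definition symm_tensor :: "'k^'n^'n \<Rightarrow> bool" where
  "symm_tensor T \<longleftrightarrow> (\<forall>i j. T $ i $ j = T $ j $ i)"

definition mat_scale :: "'k::times \<Rightarrow> 'k^'n^'n \<Rightarrow> 'k^'n^'n" where
  "mat_scale c T = (\<chi> r s. c * T $ r $ s)"

text \<open>Induced derivation on M \<otimes> M:  \<partial>(u \<otimes> v) = \<partial>u \<otimes> v + u \<otimes> \<partial>v, i.e.
 \<partial>(\<Sum> T_ij e_i\<otimes>e_j) = \<Sum> D(T_ij) e_i\<otimes>e_j + T_ij (\<partial>e_i \<otimes> e_j + e_i \<otimes> \<partial>e_j).\<close>
definition tensor2_deriv :: "('k::field \<Rightarrow> 'k) \<Rightarrow> ('k^'n \<Rightarrow> 'k^'n) \<Rightarrow> 'k^'n^'n \<Rightarrow> 'k^'n^'n" where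
  "tensor2_deriv D dM T = (\<chi> r c. D (T $ r $ c)
      + (\<Sum>i\<in>UNIV. \<Sum>j\<in>UNIV. T $ i $ j *
           ((dM (axis i 1)) $ r * (axis j 1) $ c + (axis i 1) $ r * (dM (axis j 1)) $ c)))"

text \<open>The symmetric bilinear form on M^* defined by F \<in> sym^2 M (coordinates w.r.t.
the dual basis): (a,b) = F(a \<otimes> b).\<close>
definition sym2_form :: "'k::field^'n^'n \<Rightarrow> 'k^'n \<Rightarrow> 'k^'n \<Rightarrow> 'k" where
  "sym2_form F a b = (\<Sum>i\<in>UNIV. \<Sum>j\<in>UNIV. a $ i * F $ i $ j * b $ j)"

definition nondegenerate :: "'k::field^'n^'n \<Rightarrow> bool" where
  "nondegenerate F \<longleftrightarrow> (\<forall>a. a \<noteq> 0 \<longrightarrow> (\<exists>b. sym2_form F a b \<noteq> 0))"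

definition has_isotropic :: "'k::field^'n^'n \<Rightarrow> bool" where
  "has_isotropic F \<longleftrightarrow> (\<exists>a. a \<noteq> 0 \<and> sym2_form F a a = 0)"

text \<open>det M = \<Lambda>^n M is the one-dimensional module K\<cdot>(e_1\<and>\<dots>\<and>e_n); its derivation is
\<partial>(f e_1\<and>\<dots>\<and>e_n) = D f e_1\<and>\<dots>\<and>e_n + f \<Sum>_i e_1\<and>\<dots>\<and>\<partial>e_i\<and>\<dots>\<and>e_n, where a wedge of
n vectors is the determinant of their coordinate columns times e_1\<and>\<dots>\<and>e_n.\<close>
definition top_wedge_deriv :: "('k::field \<Rightarrow> 'k) \<Rightarrow> ('k^'n \<Rightarrow> 'k^'n) \<Rightarrow> 'k \<Rightarrow> 'k" where
  "top_wedge_deriv D dM f = D f + f * (\<Sum>i\<in>UNIV.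
      det (\<chi> r c. if c = i then (dM (axis i 1)) $ r else (axis c 1) $ r))"

text \<open>det M = 1: \<Lambda>^n M is isomorphic to the trivial module, i.e. (being one-dimensional)
it has a nonzero horizontal element.\<close>
definition det_trivial :: "('k::field \<Rightarrow> 'k) \<Rightarrow> ('k^'n \<Rightarrow> 'k^'n) \<Rightarrow> bool" where
  "det_trivial D dM \<longleftrightarrow> (\<exists>f. f \<noteq> 0 \<and> top_wedge_deriv D dM f = 0)"

definition sym2_iso :: "('k::field \<Rightarrow> 'k) \<Rightarrow> ('k^'n \<Rightarrow> 'k^'n) \<Rightarrow> ('k^'m \<Rightarrow> 'k^'m)
    \<Rightarrow> ('k^'n^'n \<Rightarrow> 'k^'m) \<Rightarrow> bool" where
  "sym2_iso D dN dM \<phi> \<longleftrightarrow>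
     (\<forall>S T. symm_tensor S \<longrightarrow> symm_tensor T \<longrightarrow> \<phi> (S + T) = \<phi> S + \<phi> T) \<and>
     (\<forall>c S. symm_tensor S \<longrightarrow> \<phi> (mat_scale c S) = c *s \<phi> S) \<and>
     bij_betw \<phi> {S. symm_tensor S} UNIV \<and>
     (\<forall>S. symm_tensor S \<longrightarrow> \<phi> (tensor2_deriv D dN S) = dM (\<phi> S))"

end

theory Submission
  imports Defs
begin

text \<open>
  Choose a basis of \<open>M\<^sup>*\<close> made of a hyperbolic pair \<open>a, b\<close> of \<open>F\<close> and a vector
  orthogonal to both. In this basis the Gram matrix of \<open>F\<close> is \<open>-e\<close> times that
  of the discriminant \<open>y\<^sup>2 - 4xz\<close> of binary quadratic forms \<open>x X\<^sup>2 + y XY + z Y\<^sup>2\<close>,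
  the form carried by the symmetric square of a plane. Horizontality of \<open>F\<close> says that the
  connection matrix \<open>B\<close> of \<open>M\<close> in this basis preserves the discriminant up to the scalar
  \<open>\<partial>e/e\<close>, and such matrices are exactly those of \<open>S \<mapsto> C S + S C\<^sup>T\<close> for a
  \<open>2\<times>2\<close> matrix \<open>C\<close>. Taking \<open>C\<close> as the connection matrix of \<open>N\<close> gives
  \<open>sym\<^sup>2 N \<cong> M\<close>, and comparing traces shows that \<open>f/(e det P)\<close>, \<open>P\<close> the
  change of basis, is a horizontal generator of \<open>det N\<close> whenever \<open>f\<close> is one of \<open>det M\<close>.
\<close>

section \<open>Derivations\<close>

context
  fixes D :: "'k::field \<Rightarrow> 'k"
  assumes der: "derivation D"
begin

lemma derivation_add [simp]: "D (a + b) = D a + D b"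
  using der by (simp add: derivation_def)

lemma derivation_mult [simp]: "D (a * b) = D a * b + a * D b"
  using der by (simp add: derivation_def)

lemma derivation_zero [simp]: "D 0 = 0"
  using derivation_add[of 0 0] by (metis add.right_neutral add_left_cancel)

lemma derivation_one [simp]: "D 1 = 0"
  using derivation_mult[of 1 1] by (metis mult_1 mult_1_right add.right_neutral add_left_cancel)

lemma derivation_minus [simp]: "D (- a) = - D a"
  using derivation_add[of a "- a"] by (simp add: add_eq_0_iff)

lemma derivation_diff [simp]: "D (a - b) = D a - D b"
  by (metis derivation_add derivation_minus diff_conv_add_uminus)

lemma derivation_sum [simp]: "D (sum f S) = (\<Sum>x\<in>S. D (f x))"
  by (induction S rule: infinite_finite_induct) auto

lemma derivation_of_nat [simp]: "D (of_nat n) = 0"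
  by (induction n) auto

lemma derivation_numeral [simp]: "D (numeral n) = 0"
  by (metis derivation_of_nat of_nat_numeral)

lemma derivation_divide:
  assumes "b \<noteq> 0"
  shows "D (a / b) = (D a * b - a * D b) / b^2"
proof -
  have "D (a / b) * b + (a / b) * D b = D a"
    using derivation_mult[of "a / b" b] assms by simp
  with assms show ?thesis
    by (simp add: field_simps power2_eq_square)
qed

lemma horizontal_mult:
  assumes "D f + f * a = 0" and "D g + g * b = 0"
  shows "D (f * g) + f * g * (a + b) = 0"
proof -
  have "D f = - (f * a)" "D g = - (g * b)"
    using assms by (simp_all add: eq_neg_iff_add_eq_0)
  then show ?thesis
    by (simp add: algebra_simps)
qed

lemma horizontal_divide:
  assumes "D f + f * a = 0" and "D g + g * b = 0" and "g \<noteq> 0"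
  shows "D (f / g) + f / g * (a - b) = 0"
proof -
  have "D f = - (f * a)" "D g = - (g * b)"
    using assms(1,2) by (simp_all add: eq_neg_iff_add_eq_0)
  with assms(3) show ?thesis
    by (simp add: derivation_divide field_simps power2_eq_square)
qed

end

section \<open>Differential modules in coordinates\<close>

definition vec_deriv :: "('k::field \<Rightarrow> 'k) \<Rightarrow> 'k^'n \<Rightarrow> 'k^'n" where
  "vec_deriv D x = (\<chi> r. D (x $ r))"

definition mat_deriv :: "('k::field \<Rightarrow> 'k) \<Rightarrow> 'k^'n^'m \<Rightarrow> 'k^'n^'m" where
  "mat_deriv D X = (\<chi> i j. D (X $ i $ j))"

definition connection_matrix :: "('k::field^'n \<Rightarrow> 'k^'n) \<Rightarrow> 'k^'n^'n" where
  "connection_matrix dM = (\<chi> r i. dM (axis i 1) $ r)"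

lemma vec_deriv_matrix_vector_mult:
  assumes "derivation D"
  shows "vec_deriv D (P *v y) = mat_deriv D P *v y + P *v vec_deriv D y"
  using assms
  by (simp add: vec_eq_iff vec_deriv_def mat_deriv_def matrix_vector_mult_def sum.distrib)

lemma mat_deriv_matrix_mult:
  assumes "derivation D"
  shows "mat_deriv D (X ** Y) = mat_deriv D X ** Y + X ** mat_deriv D Y"
  using assms
  by (simp add: vec_eq_iff mat_deriv_def matrix_matrix_mult_def sum.distrib)

lemma mat_deriv_transpose: "mat_deriv D (transpose X) = transpose (mat_deriv D X)"
  by (simp add: vec_eq_iff transpose_def mat_deriv_def)

lemma mat_deriv_mat:
  assumes "derivation D"
  shows "mat_deriv D (mat 1 :: 'k::field^'n^'n) = 0"
  using assms by (simp add: vec_eq_iff mat_deriv_def mat_def)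

lemma diff_module_connection:
  assumes "derivation D" and "diff_module D dM"
  shows "dM x = vec_deriv D x + connection_matrix dM *v x"
proof -
  have add: "\<And>x y. dM (x + y) = dM x + dM y"
    and leibniz: "\<And>f x. dM (f *s x) = D f *s x + f *s dM x"
    using assms(2) by (auto simp: diff_module_def)
  have "dM 0 = 0"
    using add[of 0 0] by simp
  then have dM_sum: "dM (sum g S) = (\<Sum>i\<in>S. dM (g i))" for g :: "'n \<Rightarrow> _" and S
    by (induction S rule: infinite_finite_induct) (auto simp: add)
  have "dM x = dM (\<Sum>i\<in>UNIV. x $ i *s axis i 1)"
    by (simp add: basis_expansion)
  also have "\<dots> = (\<Sum>i\<in>UNIV. D (x $ i) *s axis i 1) + (\<Sum>i\<in>UNIV. x $ i *s dM (axis i 1))"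
    by (simp add: dM_sum leibniz sum.distrib)
  also have "(\<Sum>i\<in>UNIV. D (x $ i) *s axis i 1) = vec_deriv D x"
    using basis_expansion[of "vec_deriv D x"] by (simp add: vec_deriv_def)
  also have "(\<Sum>i\<in>UNIV. x $ i *s dM (axis i 1)) = connection_matrix dM *v x"
    by (simp add: vec_eq_iff connection_matrix_def matrix_vector_mult_def sum_component mult.commute)
  finally show ?thesis .
qed

lemma diff_module_of_connection:
  assumes "derivation D"
  shows "diff_module D (\<lambda>x. vec_deriv D x + C *v x)"
  using assms unfolding diff_module_def
  by (simp add: vec_eq_iff vec_deriv_def matrix_vector_mult_def sum.distrib distrib_left
      sum_distrib_left mult_ac)

lemma connection_matrix_of_connection:
  assumes "derivation D"
  shows "connection_matrix (\<lambda>x. vec_deriv D x + C *v x) = (C::'k::field^'n^'n)"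
  using assms
  by (simp add: vec_eq_iff connection_matrix_def vec_deriv_def axis_def matrix_vector_mult_def
      if_distrib if_distribR sum.delta cong: if_cong)

lemma tensor2_deriv_connection:
  "tensor2_deriv D dM T
     = mat_deriv D T + connection_matrix dM ** T + T ** transpose (connection_matrix dM)"
  unfolding vec_eq_iff
proof (intro allI)
  fix r c
  let ?X = "\<lambda>i r. dM (axis i 1) $ r"
  have left: "(\<Sum>i\<in>UNIV. \<Sum>j\<in>UNIV. T $ i $ j * (?X i r * axis j 1 $ c))
      = (\<Sum>i\<in>UNIV. ?X i r * T $ i $ c)"
    by (simp add: axis_def if_distrib if_distribR sum.delta' mult.commute cong: if_cong)
  have right: "(\<Sum>i\<in>UNIV. \<Sum>j\<in>UNIV. T $ i $ j * (axis i 1 $ r * ?X j c))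
      = (\<Sum>j\<in>UNIV. T $ r $ j * ?X j c)"
    by (subst sum.swap) (simp add: axis_def if_distrib if_distribR sum.delta' cong: if_cong)
  show "tensor2_deriv D dM T $ r $ c
      = (mat_deriv D T + connection_matrix dM ** T + T ** transpose (connection_matrix dM)) $ r $ c"
    using left right
    by (simp add: tensor2_deriv_def mat_deriv_def connection_matrix_def matrix_matrix_mult_def
        transpose_def distrib_left sum.distrib)
qed

lemma top_wedge_deriv_2:
  "top_wedge_deriv D (dM::'k::field^2 \<Rightarrow> 'k^2) f = D f + f * trace (connection_matrix dM)"
  by (simp add: top_wedge_deriv_def sum_2 det_2 trace_def connection_matrix_def axis_def)

lemma top_wedge_deriv_3:
  "top_wedge_deriv D (dM::'k::field^3 \<Rightarrow> 'k^3) f = D f + f * trace (connection_matrix dM)"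
  by (simp add: top_wedge_deriv_def sum_3 det_3 trace_def connection_matrix_def axis_def)

section \<open>Symmetric bilinear forms\<close>

definition vec_dot :: "'k::field^'n \<Rightarrow> 'k^'n \<Rightarrow> 'k" where
  "vec_dot x y = (\<Sum>i\<in>UNIV. x $ i * y $ i)"

definition vec_cross3 :: "'k::field^3 \<Rightarrow> 'k^3 \<Rightarrow> 'k^3" where
  "vec_cross3 a b = vector [a$2 * b$3 - a$3 * b$2, a$3 * b$1 - a$1 * b$3, a$1 * b$2 - a$2 * b$1]"

definition adjugate3 :: "'k::field^3^3 \<Rightarrow> 'k^3^3" where
  "adjugate3 m = vector [
     vector [m$2$2 * m$3$3 - m$2$3 * m$3$2, m$1$3 * m$3$2 - m$1$2 * m$3$3, m$1$2 * m$2$3 - m$1$3 * m$2$2],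
     vector [m$2$3 * m$3$1 - m$2$1 * m$3$3, m$1$1 * m$3$3 - m$1$3 * m$3$1, m$1$3 * m$2$1 - m$1$1 * m$2$3],
     vector [m$2$1 * m$3$2 - m$2$2 * m$3$1, m$1$2 * m$3$1 - m$1$1 * m$3$2, m$1$1 * m$2$2 - m$1$2 * m$2$1]]"

lemma vec_dot_scale_right: "vec_dot x (c *s y) = c * vec_dot x y"
  by (simp add: vec_dot_def sum_distrib_left mult.left_commute)

lemma sym2_form_eq_vec_dot: "sym2_form F x y = vec_dot x (F *v y)"
  by (simp add: sym2_form_def vec_dot_def matrix_vector_mult_def sum_distrib_left mult.assoc)

lemma sym2_form_commute: "symm_tensor F \<Longrightarrow> sym2_form F x y = sym2_form F y x"
  unfolding sym2_form_def symm_tensor_def by (subst sum.swap) (simp add: mult_ac)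

lemma sym2_form_scale_left: "sym2_form F (c *s x) y = c * sym2_form F x y"
  by (simp add: sym2_form_def sum_distrib_left mult_ac)

lemma sym2_form_scale_right: "sym2_form F x (c *s y) = c * sym2_form F x y"
  by (simp add: sym2_form_def sum_distrib_left mult_ac)

lemma sym2_form_diff_left: "sym2_form F (x - y) z = sym2_form F x z - sym2_form F y z"
  by (simp add: sym2_form_def sum_subtractf left_diff_distrib)

lemma sym2_form_diff_right: "sym2_form F x (y - z) = sym2_form F x y - sym2_form F x z"
  by (simp add: sym2_form_def sum_subtractf right_diff_distrib)

lemma matrix_congruence_nth: "(Q ** F ** transpose Q) $ k $ l = sym2_form F (Q $ k) (Q $ l)"
  unfolding sym2_form_def matrix_matrix_mult_def transpose_def
  by (simp add: sum_distrib_right sum_distrib_left mult_ac) (subst sum.swap, simp)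

lemma nondegenerate_det_nonzero:
  assumes "symm_tensor F" and "nondegenerate F"
  shows "det F \<noteq> 0"
proof
  assume "det F = 0"
  then obtain x where x: "F *v x = 0" "x \<noteq> 0"
    by (metis invertible_det_nz invertible_left_inverse matrix_left_invertible_ker)
  then obtain y where "sym2_form F x y \<noteq> 0"
    using assms(2) by (auto simp: nondegenerate_def)
  moreover have "sym2_form F x y = 0"
    using sym2_form_commute[OF assms(1), of x y] x by (simp add: sym2_form_eq_vec_dot vec_dot_def)
  ultimately show False by simp
qed

lemma hyperbolic_pair:
  fixes F :: "'k::field_char_0^'n^'n"
  assumes "symm_tensor F" and "nondegenerate F" and "has_isotropic F"
  obtains a b where "sym2_form F a a = 0" "sym2_form F a b = 1" "sym2_form F b b = 0"
proof -
  obtain a where "a \<noteq> 0" and aa: "sym2_form F a a = 0"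
    using assms(3) by (auto simp: has_isotropic_def)
  then obtain b0 where "sym2_form F a b0 \<noteq> 0"
    using assms(2) by (auto simp: nondegenerate_def)
  define b1 where "b1 = (1 / sym2_form F a b0) *s b0"
  have ab1: "sym2_form F a b1 = 1"
    using \<open>sym2_form F a b0 \<noteq> 0\<close> by (simp add: b1_def sym2_form_scale_right)
  define b where "b = b1 - (sym2_form F b1 b1 / 2) *s a"
  have "sym2_form F a b = 1"
    by (simp add: b_def sym2_form_diff_right sym2_form_scale_right ab1 aa)
  moreover have "sym2_form F b b = 0"
    using ab1 aa sym2_form_commute[OF assms(1), of b1 a]
    by (simp add: b_def sym2_form_diff_left sym2_form_diff_right sym2_form_scale_left
        sym2_form_scale_right algebra_simps)
  ultimately show thesis
    using that aa by blast
qed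

lemma mat_matrix_vector_mult: "mat k *v (x::'k::comm_ring_1^'n) = k *s x"
  by (simp add: vec_eq_iff mat_def matrix_vector_mult_def if_distrib if_distribR sum.delta
      cong: if_cong)

lemma matrix_mult_adjugate3: "(m::'k::field^3^3) ** adjugate3 m = mat (det m)"
  by (simp add: adjugate3_def vec_eq_iff forall_3 matrix_matrix_mult_def sum_3 det_3 mat_def; algebra)

lemma adjugate3_matrix_mult: "adjugate3 (m::'k::field^3^3) ** m = mat (det m)"
  by (simp add: adjugate3_def vec_eq_iff forall_3 matrix_matrix_mult_def sum_3 det_3 mat_def; algebra)

lemma vec_dot_cross3_left: "vec_dot a (vec_cross3 a b) = (0::'k::field)"
  by (simp add: vec_dot_def vec_cross3_def sum_3; algebra)

lemma vec_dot_cross3_right: "vec_dot b (vec_cross3 a b) = (0::'k::field)"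
  by (simp add: vec_dot_def vec_cross3_def sum_3; algebra)

lemma vec_dot_adjugate3_cross3:
  assumes "symm_tensor (F::'k::field^3^3)"
  shows "vec_dot (vec_cross3 a b) (adjugate3 F *v vec_cross3 a b)
           = sym2_form F a a * sym2_form F b b - (sym2_form F a b)^2"
proof -
  have F: "F$2$1 = F$1$2" "F$3$1 = F$1$3" "F$3$2 = F$2$3"
    using assms by (auto simp: symm_tensor_def)
  show ?thesis
    by (simp add: F vec_dot_def vec_cross3_def adjugate3_def sym2_form_def sum_3 matrix_vector_mult_def
        power2_eq_square; algebra)
qed

lemma det3_rows_cross3:
  "det (vector [t *s a, w, b] :: 'k::field^3^3) = - t * vec_dot w (vec_cross3 a b)"
  by (simp add: det_3 vec_dot_def vec_cross3_def sum_3; algebra)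

text \<open>\<open>-e\<close> times the Gram matrix of the discriminant \<open>y\<^sup>2 - 4xz\<close>.\<close>
definition sym2_normal_form :: "'k::field \<Rightarrow> 'k^3^3" where
  "sym2_normal_form e = vector [vector [0, 0, 2 * e], vector [0, - e, 0], vector [2 * e, 0, 0]]"

lemma sym2_normal_form_frame:
  fixes F :: "'k::field_char_0^3^3"
  assumes sym: "symm_tensor F" and "nondegenerate F" and "has_isotropic F"
  obtains Q e where "det Q \<noteq> 0" "e \<noteq> 0" "Q ** F ** transpose Q = sym2_normal_form e"
proof -
  obtain a b where aa: "sym2_form F a a = 0" and ab: "sym2_form F a b = 1"
    and bb: "sym2_form F b b = 0"
    using hyperbolic_pair assms by blast
  \<comment> \<open>\<open>F w = det F *s (a \<times> b)\<close>, which is orthogonal to \<open>a\<close> and \<open>b\<close>\<close>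
  define w where "w = adjugate3 F *v vec_cross3 a b"
  define e where "e = det F"
  have "e \<noteq> 0"
    using nondegenerate_det_nonzero assms(1,2) by (simp add: e_def)
  have Fw: "F *v w = det F *s vec_cross3 a b"
    by (simp add: w_def matrix_vector_mul_assoc matrix_mult_adjugate3 mat_matrix_vector_mult)
  have aw: "sym2_form F a w = 0" and bw: "sym2_form F b w = 0"
    by (simp_all add: sym2_form_eq_vec_dot Fw vec_dot_scale_right vec_dot_cross3_left
        vec_dot_cross3_right)
  have "vec_dot (vec_cross3 a b) w = -1"
    using vec_dot_adjugate3_cross3[OF sym, of a b] aa ab bb by (simp add: w_def)
  then have dot_w: "vec_dot w (vec_cross3 a b) = -1"
    by (simp add: vec_dot_def mult.commute)
  have ww: "sym2_form F w w = - e"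
    using dot_w by (simp add: sym2_form_eq_vec_dot Fw vec_dot_scale_right e_def)
  define Q :: "'k^3^3" where "Q = vector [(2 * e) *s a, w, b]"
  have "det Q = 2 * e"
    unfolding Q_def det3_rows_cross3 dot_w by simp
  then have "det Q \<noteq> 0"
    using \<open>e \<noteq> 0\<close> by simp
  moreover have "Q ** F ** transpose Q = sym2_normal_form e"
    using sym2_form_commute[OF sym] aa ab bb aw bw ww
    by (simp add: vec_eq_iff forall_3 matrix_congruence_nth Q_def sym2_normal_form_def
        sym2_form_scale_left sym2_form_scale_right)
  ultimately show thesis
    using that \<open>e \<noteq> 0\<close> by blast
qed

section \<open>Change of basis\<close>

lemma matrix_add_rdistrib: "((X::'k::comm_ring_1^'n^'m) + Y) ** Z = X ** Z + Y ** Z"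
  by (simp add: vec_eq_iff matrix_matrix_mult_def sum.distrib distrib_right)

lemma matrix_diff_rdistrib: "((X::'k::comm_ring_1^'n^'m) - Y) ** Z = X ** Z - Y ** Z"
  by (simp add: vec_eq_iff matrix_matrix_mult_def sum_subtractf left_diff_distrib)

lemma matrix_diff_ldistrib: "(X::'k::comm_ring_1^'n^'m) ** (Y - Z) = X ** Y - X ** Z"
  by (simp add: vec_eq_iff matrix_matrix_mult_def sum_subtractf right_diff_distrib)

lemma matrix_neg_right: "(X::'k::comm_ring_1^'n^'m) ** (- Z) = - (X ** Z)"
  by (simp add: vec_eq_iff matrix_matrix_mult_def sum_negf)

lemma transpose_diff: "transpose ((X::'k::comm_ring_1^'n^'m) - Y) = transpose X - transpose Y"
  by (simp add: vec_eq_iff transpose_def)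

lemma trace_mat_matrix_mult: "trace (mat k ** (X::'k::comm_ring_1^'n^'n)) = k * trace X"
  by (simp add: trace_def matrix_matrix_mult_def mat_def if_distrib if_distribR sum.delta
      sum_distrib_left cong: if_cong)

lemma mat_deriv_inverse:
  fixes P Q :: "'k::field^'n^'n"
  assumes "derivation D" and "Q ** P = mat 1"
  shows "mat_deriv D Q ** P = - (Q ** mat_deriv D P)"
proof -
  have "mat_deriv D Q ** P + Q ** mat_deriv D P = 0"
    using mat_deriv_matrix_mult[OF assms(1), of Q P] assms mat_deriv_mat by metis
  then show ?thesis
    by (simp add: eq_neg_iff_add_eq_0)
qed

lemma gauge_horizontal:
  fixes P Q A F :: "'k::field^'n^'n"
  assumes "derivation D" and PQ: "P ** Q = mat 1"
    and "mat_deriv D F + A ** F + F ** transpose A = 0"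
  defines "B \<equiv> (Q ** A - mat_deriv D Q) ** P" and "G \<equiv> Q ** F ** transpose Q"
  shows "mat_deriv D G + B ** G + G ** transpose B = 0"
proof -
  have "Y ** P ** Q = Y" for Y :: "'k^'n^'n"
    by (metis PQ matrix_mul_assoc matrix_mul_rid)
  then have BG: "B ** G = (Q ** A - mat_deriv D Q) ** F ** transpose Q"
    by (simp add: B_def G_def matrix_mul_assoc)
  have "transpose Q ** transpose P = mat 1"
    by (metis PQ matrix_transpose_mul transpose_mat)
  then have "Y ** transpose Q ** transpose P = Y" for Y :: "'k^'n^'n"
    by (metis matrix_mul_assoc matrix_mul_rid)
  then have GB: "G ** transpose B = Q ** F ** transpose (Q ** A - mat_deriv D Q)"
    by (simp add: B_def G_def matrix_transpose_mul matrix_mul_assoc)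
  have DG: "mat_deriv D G = mat_deriv D Q ** F ** transpose Q + Q ** mat_deriv D F ** transpose Q
      + Q ** F ** transpose (mat_deriv D Q)"
    by (simp add: G_def mat_deriv_matrix_mult[OF assms(1)] mat_deriv_transpose
        matrix_add_ldistrib matrix_add_rdistrib matrix_mul_assoc)
  have "mat_deriv D G + B ** G + G ** transpose B
      = Q ** (mat_deriv D F + A ** F + F ** transpose A) ** transpose Q"
    unfolding DG BG GB
    by (simp add: matrix_diff_rdistrib matrix_diff_ldistrib transpose_diff matrix_transpose_mul
        matrix_add_ldistrib matrix_add_rdistrib matrix_mul_assoc)
  with assms(3) show ?thesis
    by simp
qed

lemma gauge_connection:
  fixes P Q A :: "'k::field^'n^'n"
  assumes "derivation D" and PQ: "P ** Q = mat 1" and "Q ** P = mat 1"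
  shows "P ** ((Q ** A - mat_deriv D Q) ** P) = mat_deriv D P + A ** P"
proof -
  have "P ** ((Q ** A - mat_deriv D Q) ** P) = (P ** Q) ** A ** P - P ** (mat_deriv D Q ** P)"
    by (simp add: matrix_diff_ldistrib matrix_diff_rdistrib matrix_mul_assoc)
  also have "\<dots> = A ** P + (P ** Q) ** mat_deriv D P"
    using PQ by (simp add: mat_deriv_inverse[OF assms(1,3)] matrix_neg_right matrix_mul_assoc)
  finally show ?thesis
    using PQ by simp
qed

lemma deriv_det3:
  assumes "derivation D"
  shows "D (det (P::'k::field^3^3)) = trace (adjugate3 P ** mat_deriv D P)"
  using assms
  by (simp add: det_3 trace_def adjugate3_def mat_deriv_def matrix_matrix_mult_def sum_3; algebra)

lemma gauge_det3:
  fixes P Q A :: "'k::field^3^3"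
  assumes "derivation D" and PQ: "P ** Q = mat 1" and QP: "Q ** P = mat 1"
  shows "D (det P) + det P * (trace A - trace ((Q ** A - mat_deriv D Q) ** P)) = 0"
proof -
  have "adjugate3 P = adjugate3 P ** (P ** Q)"
    using PQ by simp
  then have "adjugate3 P = mat (det P) ** Q"
    by (simp add: matrix_mul_assoc adjugate3_matrix_mult)
  then have "D (det P) = det P * trace (Q ** mat_deriv D P)"
    by (simp add: deriv_det3[OF assms(1)] trace_mat_matrix_mult matrix_mul_assoc[symmetric])
  moreover have "trace ((Q ** A) ** P) = trace A"
    using trace_mul_sym[of "Q ** A" P] PQ by (simp add: matrix_mul_assoc)
  moreover have "trace (- X) = - trace X" for X :: "'k^3^3"
    by (simp add: trace_def sum_negf)
  ultimately show ?thesis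
    by (simp add: matrix_diff_rdistrib trace_sub trace_add mat_deriv_inverse[OF assms(1) QP]
        algebra_simps)
qed

section \<open>Symmetric squares of planes\<close>

definition sym2_coords :: "'k::field^2^2 \<Rightarrow> 'k^3" where
  "sym2_coords S = vector [S$1$1, S$1$2, S$2$2]"

definition sym2_root :: "'k::field^3^3 \<Rightarrow> 'k^2^2" where
  "sym2_root B = vector [vector [B$1$1 / 2, B$2$3], vector [B$2$1, B$3$3 / 2]]"

lemma sym2_coords_add: "sym2_coords (S + T) = sym2_coords S + sym2_coords T"
  by (simp add: sym2_coords_def vec_eq_iff forall_3)

lemma sym2_coords_mat_scale: "sym2_coords (mat_scale c S) = c *s sym2_coords S"
  by (simp add: sym2_coords_def mat_scale_def vec_eq_iff forall_3)

lemma sym2_coords_mat_deriv: "sym2_coords (mat_deriv D S) = vec_deriv D (sym2_coords S)"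
  by (simp add: sym2_coords_def mat_deriv_def vec_deriv_def vec_eq_iff forall_3)

text \<open>The matrices of \<open>S \<mapsto> C S + S C\<^sup>T\<close> in the coordinates \<open>sym2_coords\<close>; then
  \<open>C = sym2_root B\<close>.\<close>
definition is_sym2_matrix :: "'k::field^3^3 \<Rightarrow> bool" where
  "is_sym2_matrix B \<longleftrightarrow> B$1$3 = 0 \<and> B$3$1 = 0 \<and> B$1$2 = 2 * B$2$3 \<and> B$3$2 = 2 * B$2$1
     \<and> 2 * B$2$2 = B$1$1 + B$3$3"

lemma sym2_coords_sym2_root:
  fixes B :: "'k::field_char_0^3^3"
  assumes "is_sym2_matrix B" and "symm_tensor S"
  shows "sym2_coords (sym2_root B ** S + S ** transpose (sym2_root B)) = B *v sym2_coords S"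
proof -
  have S: "S$2$1 = S$1$2"
    using assms(2) by (simp add: symm_tensor_def)
  have B: "B$1$3 = 0" "B$3$1 = 0" "B$1$2 = 2 * B$2$3" "B$3$2 = 2 * B$2$1"
    "B$2$2 = (B$1$1 + B$3$3) / 2"
    using assms(1) by (simp_all add: is_sym2_matrix_def field_simps)
  show ?thesis
    unfolding vec_eq_iff forall_3
    by (simp add: S B sym2_coords_def sym2_root_def matrix_matrix_mult_def matrix_vector_mult_def
        transpose_def sum_2 sum_3 algebra_simps add_divide_distrib[symmetric])
qed

lemma bij_betw_sym2_coords: "bij_betw (sym2_coords :: 'k::field^2^2 \<Rightarrow> 'k^3) {S. symm_tensor S} UNIV"
proof (rule bij_betwI')
  fix S T :: "'k^2^2"
  assume "S \<in> {S. symm_tensor S}" and "T \<in> {S. symm_tensor S}"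
  then have sym: "S$2$1 = S$1$2" "T$2$1 = T$1$2"
    by (simp_all add: symm_tensor_def)
  show "sym2_coords S = sym2_coords T \<longleftrightarrow> S = T"
  proof
    assume "sym2_coords S = sym2_coords T"
    then have "sym2_coords S $ k = sym2_coords T $ k" for k
      by simp
    from this[of 1] this[of 2] this[of 3] show "S = T"
      by (simp add: sym2_coords_def vec_eq_iff forall_2 sym)
  qed simp
next
  fix y :: "'k^3"
  have "y = sym2_coords (vector [vector [y$1, y$2], vector [y$2, y$3]])"
    by (simp add: sym2_coords_def vec_eq_iff forall_3)
  moreover have "symm_tensor (vector [vector [y$1, y$2], vector [y$2, y$3]] :: 'k^2^2)"
    by (simp add: symm_tensor_def forall_2)
  ultimately show "\<exists>S\<in>{S. symm_tensor S}. y = sym2_coords S"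
    by blast
qed simp

lemma sym2_iso_sym2_root:
  fixes B :: "'k::field_char_0^3^3"
  assumes "derivation D" and dM: "\<And>x. dM x = vec_deriv D x + A *v x"
    and "invertible P" and PB: "P ** B = mat_deriv D P + A ** P" and "is_sym2_matrix B"
  shows "sym2_iso D (\<lambda>x. vec_deriv D x + sym2_root B *v x) dM (\<lambda>S. P *v sym2_coords S)"
  unfolding sym2_iso_def
proof (intro conjI allI impI)
  fix S T :: "'k^2^2"
  show "P *v sym2_coords (S + T) = P *v sym2_coords S + P *v sym2_coords T"
    by (simp add: sym2_coords_add matrix_vector_right_distrib)
next
  fix c and S :: "'k^2^2"
  show "P *v sym2_coords (mat_scale c S) = c *s (P *v sym2_coords S)"
    by (simp add: sym2_coords_mat_scale vector_scalar_commute)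
next
  have "bij ((*v) P)"
    using assms(3) invertible_eq_bij by blast
  then show "bij_betw (\<lambda>S. P *v sym2_coords S) {S. symm_tensor S} UNIV"
    using bij_betw_trans[OF bij_betw_sym2_coords] by (auto simp: comp_def)
next
  fix S :: "'k^2^2"
  assume "symm_tensor S"
  let ?C = "sym2_root B"
  have "sym2_coords (tensor2_deriv D (\<lambda>x. vec_deriv D x + ?C *v x) S)
      = vec_deriv D (sym2_coords S) + sym2_coords (?C ** S + S ** transpose ?C)"
    by (simp add: tensor2_deriv_connection connection_matrix_of_connection[OF assms(1)]
        sym2_coords_add sym2_coords_mat_deriv add.assoc)
  also have "\<dots> = vec_deriv D (sym2_coords S) + B *v sym2_coords S"
    using sym2_coords_sym2_root[OF assms(5) \<open>symm_tensor S\<close>] by simp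
  finally have "P *v sym2_coords (tensor2_deriv D (\<lambda>x. vec_deriv D x + ?C *v x) S)
      = P *v vec_deriv D (sym2_coords S) + (mat_deriv D P + A ** P) *v sym2_coords S"
    by (simp add: matrix_vector_right_distrib matrix_vector_mul_assoc PB)
  also have "\<dots> = dM (P *v sym2_coords S)"
    by (simp add: dM vec_deriv_matrix_vector_mult[OF assms(1)] matrix_vector_mult_add_rdistrib
        matrix_vector_mul_assoc algebra_simps)
  finally show "P *v sym2_coords (tensor2_deriv D (\<lambda>x. vec_deriv D x + ?C *v x) S)
      = dM (P *v sym2_coords S)" .
qed

lemma horizontal_sym2_normal_form:
  fixes B :: "'k::field_char_0^3^3"
  assumes "derivation D" and "e \<noteq> 0"
    and "mat_deriv D (sym2_normal_form e) + B ** sym2_normal_form e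
           + sym2_normal_form e ** transpose B = 0"
  shows "is_sym2_matrix B" and "D e + e * (B$1$1 + B$3$3) = 0"
proof -
  let ?H = "mat_deriv D (sym2_normal_form e) + B ** sym2_normal_form e
           + sym2_normal_form e ** transpose B"
  have E: "?H $ i $ j = 0" for i j
    using assms(3) by simp
  note entries = sym2_normal_form_def mat_deriv_def matrix_matrix_mult_def sum_3 transpose_def
    derivation_zero[OF assms(1)] derivation_mult[OF assms(1)] derivation_minus[OF assms(1)]
    derivation_numeral[OF assms(1)]
  have "?H $ 2 $ 2 = - (D e + e * (2 * B$2$2))"
    by (simp add: entries algebra_simps)
  then have diag: "D e + e * (2 * B$2$2) = 0"
    using E[of 2 2] by (metis neg_equal_0_iff_equal)
  have "?H $ 1 $ 3 = 2 * (D e + e * (B$1$1 + B$3$3))"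
    by (simp add: entries algebra_simps)
  then show corner: "D e + e * (B$1$1 + B$3$3) = 0"
    using E[of 1 3] by (metis mult_eq_0_iff zero_neq_numeral)
  have "2 * B$2$2 = B$1$1 + B$3$3"
    using diag corner assms(2) by (metis add_left_cancel mult_cancel_left)
  moreover have "B$1$3 = 0" "B$3$1 = 0" "B$1$2 = 2 * B$2$3" "B$3$2 = 2 * B$2$1"
    using E[of 1 1] E[of 3 3] E[of 1 2] E[of 2 3] assms(2) by (simp_all add: entries algebra_simps)
  ultimately show "is_sym2_matrix B"
    by (simp add: is_sym2_matrix_def)
qed

lemma det_trivial_sym2_root:
  fixes B :: "'k::field_char_0^3^3"
  assumes "derivation D" and "is_sym2_matrix B"
    and "f \<noteq> 0" "D f + f * a = 0"
    and "e \<noteq> 0" "D e + e * (B$1$1 + B$3$3) = 0"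
    and "p \<noteq> 0" "D p + p * (a - trace B) = 0"
  shows "det_trivial D (\<lambda>x. vec_deriv D x + sym2_root B *v x)"
proof -
  have "D (e * p) + e * p * ((B$1$1 + B$3$3) + (a - trace B)) = 0"
    using horizontal_mult[OF assms(1) assms(6,8)] .
  from horizontal_divide[OF assms(1) assms(4) this] assms(5,7)
  have horizontal: "D (f / (e * p)) + f / (e * p) * (a - ((B$1$1 + B$3$3) + (a - trace B))) = 0"
    by simp
  have "2 * B$2$2 = B$1$1 + B$3$3"
    using assms(2) by (simp add: is_sym2_matrix_def)
  then have trace: "a - ((B$1$1 + B$3$3) + (a - trace B)) = trace (sym2_root B)"
    by (simp add: trace_def sum_2 sum_3 sym2_root_def field_simps)
  have "f / (e * p) \<noteq> 0"
    using assms(3,5,7) by simp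
  with horizontal[unfolded trace] show ?thesis
    unfolding det_trivial_def top_wedge_deriv_2 connection_matrix_of_connection[OF assms(1)]
    by blast
qed

theorem theorem2p1:
  fixes D :: "'k::field_char_0 \<Rightarrow> 'k"
    and dM :: "'k^3 \<Rightarrow> 'k^3"
    and F :: "'k^3^3"
  assumes "derivation D"
    and "diff_module D dM"
    and "det_trivial D dM"
    and "symm_tensor F"
    and "tensor2_deriv D dM F = 0"
    and "nondegenerate F"
    and "has_isotropic F"
  shows "\<exists>(dN :: 'k^2 \<Rightarrow> 'k^2) (\<phi> :: 'k^2^2 \<Rightarrow> 'k^3).
           diff_module D dN \<and> det_trivial D dN \<and> sym2_iso D dN dM \<phi>"
proof -
  let ?A = "connection_matrix dM"
  obtain f where "f \<noteq> 0" "D f + f * trace ?A = 0"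
    using assms(3) by (auto simp: det_trivial_def top_wedge_deriv_3)
  obtain Q e where "det Q \<noteq> 0" "e \<noteq> 0" and G: "Q ** F ** transpose Q = sym2_normal_form e"
    using sym2_normal_form_frame assms(4,6,7) by blast
  then obtain P where QP: "Q ** P = mat 1"
    by (metis invertible_det_nz invertible_right_inverse)
  then have PQ: "P ** Q = mat 1"
    by (metis matrix_left_right_inverse)
  define B where "B = (Q ** ?A - mat_deriv D Q) ** P"
  have "mat_deriv D F + ?A ** F + F ** transpose ?A = 0"
    using assms(5) by (simp add: tensor2_deriv_connection)
  from gauge_horizontal[OF assms(1) PQ this]
  have "mat_deriv D (sym2_normal_form e) + B ** sym2_normal_form e
          + sym2_normal_form e ** transpose B = 0"
    unfolding G B_def .
  note B = horizontal_sym2_normal_form[OF assms(1) \<open>e \<noteq> 0\<close> this]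
  have "D (det P) + det P * (trace ?A - trace B) = 0"
    unfolding B_def by (rule gauge_det3[OF assms(1) PQ QP])
  moreover have "det P \<noteq> 0"
    using det_mul[of P Q] PQ by auto
  moreover have "P ** B = mat_deriv D P + ?A ** P"
    unfolding B_def by (rule gauge_connection[OF assms(1) PQ QP])
  moreover have "invertible P"
    using PQ QP invertible_def by blast
  ultimately show ?thesis
    using diff_module_of_connection[OF assms(1)]
      det_trivial_sym2_root[OF assms(1) B(1) \<open>f \<noteq> 0\<close> \<open>D f + f * trace ?A = 0\<close> \<open>e \<noteq> 0\<close> B(2)]
      sym2_iso_sym2_root[OF assms(1) diff_module_connection[OF assms(1,2)] _ _ B(1)]
    by blast
qed

end
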